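(* Let $A\subset\mathbb{N}\setminus\{1\}$ and let $M\subset\ell^\infty$ be a $2$-dimensional linear subspace such that $|L_z|\in A$ for every $z\in M\setminus\{0\}$. Put $$n_1=\min\{|L_z|: z\in M\setminus\{0\}\},\qquad n_2=\max\{|L_z|: z\in M\}.$$ Then $n_1,n_2\in A$ and the open interval $(n_2-n_1,n_2)$ contains an element of $A$.
   Context: $\ell^\infty$ is the space of bounded real sequences with the sup norm. For $x\in\ell^\infty$, $L_x$ denotes the set of accumulation points (subsequential limits) of $x$, and $|L_x|$ its cardinality. *)

theory Defs
  imports "HOL-Analysis.Analysis"
begin

text \<open>The space of bounded real sequences with the sup norm is modelled as the
  library type of bounded continuous functions \<open>nat \<Rightarrow>\<^sub>C real\<close>
  (every function on the discrete space \<open>nat\<close> is continuous).\<close>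

definition acc_points :: "(nat \<Rightarrow>\<^sub>C real) \<Rightarrow> real set" where
  "acc_points x = {l. \<exists>r::nat \<Rightarrow> nat. strict_mono r \<and> ((\<lambda>n. apply_bcontfun x (r n)) \<longlonglongrightarrow> l)}"

end

theory Submission
  imports Defs
begin

text \<open>Let \<open>x, y\<close> be a basis of \<open>M\<close> and \<open>K \<subseteq> \<real>\<^sup>2\<close> the set of joint
  accumulation points of the pair sequence \<open>(x n, y n)\<close>. Bolzano--Weierstrass shows that the
  accumulation points of \<open>a x + b y\<close> are exactly the values of the functional \<open>(a, b)\<close> on \<open>K\<close>,
  so all the counts are numbers of values of nonzero functionals on the finite set \<open>K\<close>.
  The largest is \<open>|K|\<close>, attained by any functional injective on \<open>K\<close>; the smallest,
  \<open>n\<close>, is at least 2 because \<open>1 \<notin> A\<close>. Given \<open>u\<close> with \<open>n\<close> values on \<open>K\<close>, use the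
  coordinates \<open>X = \<langle>u, -\<rangle>\<close>, \<open>Y = \<langle>u\<^sup>\<bottom>, -\<rangle>\<close> and let \<open>s\<close> be the
  steepest slope of a chord of \<open>K\<close>. Then \<open>Y - s X\<close> identifies the endpoints of that chord,
  so it takes fewer than \<open>|K|\<close> values, while \<open>P \<mapsto> (X P, s X P - Y P)\<close> maps \<open>K\<close>
  injectively onto a chain for the product order; since a finite chain \<open>S\<close> has
  \<open>|S| < |fst S| + |snd S|\<close>, \<open>Y - s X\<close> takes more than \<open>|K| - n\<close> values.\<close>

lemma card_chain_less_card_fst_plus_card_snd:
  fixes S :: "('a::linorder \<times> 'b::linorder) set"
  assumes "finite S" and "S \<noteq> {}" and "\<forall>p\<in>S. \<forall>q\<in>S. p \<le> q \<or> q \<le> p"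
  shows "card S < card (fst ` S) + card (snd ` S)"
  using assms
proof (induction S rule: finite_remove_induct)
  case empty
  then show ?case by simp
next
  case (remove S)
  obtain m where "m \<in> S" and "\<forall>p\<in>S. m \<le> p \<longrightarrow> m = p"
    using finite_has_maximal[OF remove.hyps(1,2)] by blast
  with remove.prems have greatest: "\<forall>p\<in>S. p \<le> m" by blast
  show ?case
  proof (cases "S = {m}")
    case True
    then show ?thesis by simp
  next
    case False
    let ?R = "S - {m}"
    have IH: "card ?R < card (fst ` ?R) + card (snd ` ?R)"
      using remove.IH[OF \<open>m \<in> S\<close>] False \<open>m \<in> S\<close> remove.prems by blast
    have new: "fst m \<notin> fst ` ?R \<or> snd m \<notin> snd ` ?R"
    proof (rule ccontr)
      assume "\<not> ?thesis"
      then obtain p q where "p \<in> ?R" "q \<in> ?R" "fst p = fst m" "snd q = snd m" by force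
      moreover have "p \<le> q \<or> q \<le> p" and "p \<le> m" and "q \<le> m"
        using remove.prems greatest \<open>p \<in> ?R\<close> \<open>q \<in> ?R\<close> by auto
      ultimately have "p = m \<or> q = m"
        by (auto simp: less_eq_prod_def prod_eq_iff)
      then show False using \<open>p \<in> ?R\<close> \<open>q \<in> ?R\<close> by blast
    qed
    have "card S = Suc (card ?R)"
      using remove.hyps(1) \<open>m \<in> S\<close> by (rule card.remove)
    moreover have "fst ` S = insert (fst m) (fst ` ?R)" and "snd ` S = insert (snd m) (snd ` ?R)"
      using \<open>m \<in> S\<close> by blast+
    ultimately show ?thesis
      using new IH remove.hyps(1) by (auto simp: card_insert_if)
  qed
qed

lemma ex_shear_card_image_between:
  fixes K :: "'p set" and X Y :: "'p \<Rightarrow> real"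
  assumes "finite K" and "inj_on (\<lambda>P. (X P, Y P)) K" and "2 \<le> card (X ` K)"
  shows "\<exists>s. card K < card ((\<lambda>P. Y P - s * X P) ` K) + card (X ` K) \<and>
             card ((\<lambda>P. Y P - s * X P) ` K) < card K"
proof -
  define slopes where
    "slopes = (\<lambda>(P, Q). (Y Q - Y P) / (X Q - X P)) ` {(P, Q) \<in> K \<times> K. X P < X Q}"
  have "finite slopes"
    unfolding slopes_def using \<open>finite K\<close> by (auto intro: finite_subset[of _ "K \<times> K"])
  moreover have "slopes \<noteq> {}"
  proof -
    obtain P Q where "P \<in> K" "Q \<in> K" "X P \<noteq> X Q"
      using assms(3) card_le_Suc0_iff_eq[OF finite_imageI[OF \<open>finite K\<close>], of X]
      by (auto simp: numeral_2_eq_2)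
    then have "(P, Q) \<in> {(P, Q) \<in> K \<times> K. X P < X Q} \<or> (Q, P) \<in> {(P, Q) \<in> K \<times> K. X P < X Q}"
      by auto
    then show ?thesis unfolding slopes_def by blast
  qed
  ultimately have "Max slopes \<in> slopes" by (rule Max_in)
  define s where "s = Max slopes"
  obtain P0 Q0 where P0Q0: "P0 \<in> K" "Q0 \<in> K" "X P0 < X Q0"
    and steepest: "s = (Y Q0 - Y P0) / (X Q0 - X P0)"
    using \<open>Max slopes \<in> slopes\<close> unfolding s_def slopes_def by auto
  define v where "v P = Y P - s * X P" for P
  have antitone: "v Q \<le> v P" if "P \<in> K" "Q \<in> K" "X P < X Q" for P Q
  proof -
    have "(Y Q - Y P) / (X Q - X P) \<le> s"
      unfolding s_def using \<open>finite slopes\<close> that by (auto simp: slopes_def intro!: Max_ge)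
    then show ?thesis using that by (simp add: v_def divide_le_eq algebra_simps)
  qed
  have "v P0 = v Q0" using P0Q0 steepest by (simp add: v_def field_simps)
  then have "\<not> inj_on v K" using P0Q0 unfolding inj_on_def by (metis less_irrefl)
  then have upper: "card (v ` K) < card K"
    using \<open>finite K\<close> card_image_le[of K v] inj_on_iff_eq_card[of K v] by linarith
  define S where "S = (\<lambda>P. (X P, - v P)) ` K"
  have "inj_on (\<lambda>P. (X P, - v P)) K"
    using assms(2) by (auto simp: inj_on_def v_def)
  then have "card S = card K" unfolding S_def by (rule card_image)
  moreover have "card (snd ` S) = card (v ` K)"
  proof -
    have "snd ` S = uminus ` v ` K" unfolding S_def by (simp add: image_image)
    then show ?thesis by (simp add: card_image)
  qed
  moreover have "fst ` S = X ` K" unfolding S_def by (simp add: image_image)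
  moreover have "card S < card (fst ` S) + card (snd ` S)"
  proof (rule card_chain_less_card_fst_plus_card_snd)
    have "(X P, - v P) \<le> (X Q, - v Q) \<or> (X Q, - v Q) \<le> (X P, - v P)"
      if "P \<in> K" "Q \<in> K" for P Q
      using antitone[OF that] antitone[OF that(2,1)]
      by (cases "X P" "X Q" rule: linorder_cases) (auto simp: less_eq_prod_def)
    then show "\<forall>p\<in>S. \<forall>q\<in>S. p \<le> q \<or> q \<le> p" unfolding S_def by blast
  qed (use \<open>finite K\<close> assms(3) in \<open>auto simp: S_def\<close>)
  ultimately have "card K < card (v ` K) + card (X ` K)" by simp
  with upper show ?thesis unfolding v_def by blast
qed

lemma ex_inner_inj_on:
  fixes K :: "(real \<times> real) set"
  assumes "finite K"
  obtains u where "u \<noteq> 0" and "inj_on (inner u) K"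
proof -
  let ?collapsing = "(\<lambda>(P, Q). (fst P - fst Q) / (snd Q - snd P)) ` (K \<times> K)"
  obtain t where "t \<notin> ?collapsing"
    using ex_new_if_finite[OF infinite_UNIV_char_0, of ?collapsing] assms by auto
  have "inj_on (inner (1, t)) K"
  proof (rule inj_onI)
    fix P Q assume PQ: "P \<in> K" "Q \<in> K" "inner (1, t) P = inner (1, t) Q"
    show "P = Q"
    proof (cases "snd P = snd Q")
      case True
      with PQ(3) show ?thesis by (simp add: inner_prod_def prod_eq_iff)
    next
      case False
      with PQ(3) have "t = (fst P - fst Q) / (snd Q - snd P)"
        by (simp add: inner_prod_def field_simps)
      with PQ(1,2) have "t \<in> ?collapsing" by force
      with \<open>t \<notin> ?collapsing\<close> show ?thesis by blast
    qed
  qed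
  then show thesis using that[of "(1, t)"] by (simp add: zero_prod_def)
qed

lemma ex_inner_card_image_between:
  fixes K :: "(real \<times> real) set" and u :: "real \<times> real"
  assumes "finite K" and "u \<noteq> 0" and "2 \<le> card (inner u ` K)"
  obtains w where "w \<noteq> 0" and "card K < card (inner w ` K) + card (inner u ` K)"
    and "card (inner w ` K) < card K"
proof -
  define u' where "u' = (- snd u, fst u)"
  have orth: "inner u' u = 0" and same_norm: "inner u' u' = inner u u"
    by (simp_all add: u'_def inner_prod_def)
  have "inj_on (\<lambda>P. (inner u P, inner u' P)) K"
  proof (rule inj_onI)
    fix P Q assume "(inner u P, inner u' P) = (inner u Q, inner u' Q)"
    then have "inner u (P - Q) = 0" and "inner u' (P - Q) = 0"
      by (simp_all add: inner_diff_right)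
    moreover have "(inner u d)\<^sup>2 + (inner u' d)\<^sup>2 = inner u u * inner d d" for d
      by (simp add: u'_def inner_prod_def power2_eq_square algebra_simps)
    ultimately have "inner u u * inner (P - Q) (P - Q) = 0" by (metis zero_power2 add_0)
    with \<open>u \<noteq> 0\<close> show "P = Q" by simp
  qed
  then obtain s where s: "card K < card ((\<lambda>P. inner u' P - s * inner u P) ` K) + card (inner u ` K)"
    "card ((\<lambda>P. inner u' P - s * inner u P) ` K) < card K"
    using ex_shear_card_image_between[OF assms(1) _ assms(3)] by blast
  have "(\<lambda>P. inner u' P - s * inner u P) = inner (u' - s *\<^sub>R u)"
    by (simp add: fun_eq_iff inner_diff_left)
  moreover have "u' - s *\<^sub>R u \<noteq> 0"
  proof
    assume "u' - s *\<^sub>R u = 0"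
    then have "inner u' (u' - s *\<^sub>R u) = 0" by simp
    then have "inner u u = 0" using orth same_norm by (simp add: inner_diff_right inner_commute)
    with \<open>u \<noteq> 0\<close> show False by simp
  qed
  ultimately show thesis using that s by metis
qed

lemma ex_projection_card_in_gap:
  fixes K :: "(real \<times> real) set" and A :: "nat set"
  assumes "finite K" and "K \<noteq> {}" and "1 \<notin> A"
    and "\<And>u. u \<noteq> 0 \<Longrightarrow> card (inner u ` K) \<in> A" and "u \<noteq> 0"
  shows "\<exists>a\<in>A. card K - card (inner u ` K) < a \<and> a < card K"
proof -
  have "card (inner u ` K) \<noteq> 0" using assms(1,2) by simp
  moreover have "card (inner u ` K) \<noteq> 1" using assms(3-5) by metis
  ultimately have "2 \<le> card (inner u ` K)" by linarith
  then obtain w where "w \<noteq> 0" and lower: "card K < card (inner w ` K) + card (inner u ` K)"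
    and upper: "card (inner w ` K) < card K"
    using ex_inner_card_image_between[OF assms(1,5)] by blast
  from lower have "card K - card (inner u ` K) < card (inner w ` K)"
    using card_image_le[OF assms(1), of "inner u"] by arith
  with upper assms(4)[OF \<open>w \<noteq> 0\<close>] show ?thesis by blast
qed

lemma projection_cards_min_max_gap:
  fixes K :: "(real \<times> real) set" and A :: "nat set"
  assumes "K \<noteq> {}" and "1 \<notin> A"
    and projection: "\<And>u. u \<noteq> 0 \<Longrightarrow> finite (inner u ` K) \<and> card (inner u ` K) \<in> A"
  obtains u0 g where "u0 \<noteq> 0" and "\<And>u. u \<noteq> 0 \<Longrightarrow> card (inner u0 ` K) \<le> card (inner u ` K)"
    and "\<And>u. card (inner u ` K) \<le> card (inner g ` K)"
    and "card (inner u0 ` K) \<in> A" and "card (inner g ` K) \<in> A"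
    and "\<exists>a\<in>A. card (inner g ` K) - card (inner u0 ` K) < a \<and> a < card (inner g ` K)"
proof -
  have "K \<subseteq> inner (1, 0) ` K \<times> inner (0, 1) ` K"
    by (force simp: inner_prod_def)
  then have "finite K"
    using projection[of "(1, 0)"] projection[of "(0, 1)"]
    by (auto simp: zero_prod_def intro: finite_subset)
  then obtain g where "g \<noteq> 0" and "inj_on (inner g) K"
    using ex_inner_inj_on by blast
  then have card_g: "card (inner g ` K) = card K" by (simp add: card_image)
  obtain u0 where "u0 \<noteq> 0" and "\<And>u. u \<noteq> 0 \<Longrightarrow> card (inner u0 ` K) \<le> card (inner u ` K)"
    using ex_has_least_nat[of "\<lambda>u. u \<noteq> 0" g "\<lambda>u. card (inner u ` K)"] \<open>g \<noteq> 0\<close> by blast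
  then show thesis
  proof (rule that)
    show "card (inner u ` K) \<le> card (inner g ` K)" for u
      unfolding card_g using \<open>finite K\<close> by (rule card_image_le)
    show "card (inner u0 ` K) \<in> A" and "card (inner g ` K) \<in> A"
      using projection \<open>u0 \<noteq> 0\<close> \<open>g \<noteq> 0\<close> by blast+
    show "\<exists>a\<in>A. card (inner g ` K) - card (inner u0 ` K) < a \<and> a < card (inner g ` K)"
      unfolding card_g using ex_projection_card_in_gap[OF \<open>finite K\<close> assms(1,2) _ \<open>u0 \<noteq> 0\<close>] projection
      by blast
  qed
qed

definition subseq_limits :: "(nat \<Rightarrow> 'a::topological_space) \<Rightarrow> 'a set" where
  "subseq_limits f = {l. \<exists>r. strict_mono r \<and> (f \<circ> r) \<longlonglongrightarrow> l}"

lemma subseq_limits_nonempty: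
  fixes f :: "nat \<Rightarrow> 'a::heine_borel"
  assumes "bounded (range f)"
  shows "subseq_limits f \<noteq> {}"
  using bounded_imp_convergent_subsequence[OF assms] unfolding subseq_limits_def by blast

lemma subseq_limits_comp:
  fixes f :: "nat \<Rightarrow> 'a::heine_borel" and h :: "'a \<Rightarrow> 'b::t2_space"
  assumes "bounded (range f)" and "continuous_on UNIV h"
  shows "subseq_limits (h \<circ> f) = h ` subseq_limits f"
proof (intro equalityI subsetI)
  fix l assume "l \<in> subseq_limits (h \<circ> f)"
  then obtain r where r: "strict_mono r" "(h \<circ> f \<circ> r) \<longlonglongrightarrow> l"
    unfolding subseq_limits_def by (auto simp: o_assoc)
  have "bounded (range (f \<circ> r))"
    using assms(1) by (rule bounded_subset) auto
  then obtain p q where q: "strict_mono q" "(f \<circ> r \<circ> q) \<longlonglongrightarrow> p"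
    using bounded_imp_convergent_subsequence by blast
  have "(h \<circ> f \<circ> r \<circ> q) \<longlonglongrightarrow> l"
    using LIMSEQ_subseq_LIMSEQ[OF r(2) q(1)] .
  moreover have "(h \<circ> (f \<circ> r \<circ> q)) \<longlonglongrightarrow> h p"
    using continuous_on_tendsto_compose[OF assms(2) q(2)] by (simp add: o_def)
  ultimately have "l = h p" by (simp add: o_assoc LIMSEQ_unique)
  moreover have "p \<in> subseq_limits f"
    unfolding subseq_limits_def using strict_mono_o[OF r(1) q(1)] q(2) by (auto simp: o_assoc)
  ultimately show "l \<in> h ` subseq_limits f" by blast
next
  fix l assume "l \<in> h ` subseq_limits f"
  then obtain p r where "l = h p" "strict_mono r" "(f \<circ> r) \<longlonglongrightarrow> p"
    unfolding subseq_limits_def by blast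
  moreover have "(h \<circ> f \<circ> r) \<longlonglongrightarrow> h p"
    using continuous_on_tendsto_compose[OF assms(2) \<open>(f \<circ> r) \<longlonglongrightarrow> p\<close>]
    by (simp add: o_def)
  ultimately show "l \<in> subseq_limits (h \<circ> f)"
    unfolding subseq_limits_def by blast
qed

lemma acc_points_eq_subseq_limits: "acc_points x = subseq_limits (apply_bcontfun x)"
  by (simp add: acc_points_def subseq_limits_def o_def)

lemma bounded_range_apply_bcontfun_pair:
  "bounded (range (\<lambda>n. (apply_bcontfun x n, apply_bcontfun y n)))"
  by (rule bounded_subset[OF bounded_Times[OF bounded_apply_bcontfun bounded_apply_bcontfun]]) auto

lemma acc_points_linear_combination:
  fixes x y :: "nat \<Rightarrow>\<^sub>C real" and u :: "real \<times> real"
  shows "acc_points (fst u *\<^sub>R x + snd u *\<^sub>R y)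
    = inner u ` subseq_limits (\<lambda>n. (apply_bcontfun x n, apply_bcontfun y n))"
proof -
  have "apply_bcontfun (fst u *\<^sub>R x + snd u *\<^sub>R y)
      = inner u \<circ> (\<lambda>n. (apply_bcontfun x n, apply_bcontfun y n))"
    by (simp add: fun_eq_iff inner_prod_def plus_bcontfun.rep_eq scaleR_bcontfun.rep_eq)
  then show ?thesis
    unfolding acc_points_eq_subseq_limits
    using subseq_limits_comp[OF bounded_range_apply_bcontfun_pair, of "inner u"]
    by (simp add: continuous_on_inner continuous_on_const continuous_on_id)
qed

lemma subspace_dim_2_eq_range:
  fixes M :: "'a::real_vector set"
  assumes "subspace M" and "dim M = 2"
  obtains x y where "M = range (\<lambda>u::real \<times> real. fst u *\<^sub>R x + snd u *\<^sub>R y)"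
    and "\<And>u. fst u *\<^sub>R x + snd u *\<^sub>R y = 0 \<Longrightarrow> u = 0"
proof -
  obtain B where B: "B \<subseteq> M" "independent B" "M \<subseteq> span B" "card B = 2"
    using basis_exists[of M] assms(2) by auto
  then obtain x y where xy: "B = {x, y}" "x \<noteq> y" by (auto simp: card_2_iff)
  have "M = span {x, y}" using span_subspace[OF B(1,3) assms(1)] xy(1) by simp
  also have "\<dots> = range (\<lambda>u::real \<times> real. fst u *\<^sub>R x + snd u *\<^sub>R y)"
  proof (intro equalityI subsetI)
    fix z assume "z \<in> span {x, y}"
    then obtain a b where "z - a *\<^sub>R x = b *\<^sub>R y"
      unfolding span_insert[of x "{y}"] span_singleton by blast
    then have "z = fst (a, b) *\<^sub>R x + snd (a, b) *\<^sub>R y" by (simp add: algebra_simps)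
    then show "z \<in> range (\<lambda>u::real \<times> real. fst u *\<^sub>R x + snd u *\<^sub>R y)" by blast
  qed (auto intro: span_add span_scale span_base)
  finally have "M = range (\<lambda>u::real \<times> real. fst u *\<^sub>R x + snd u *\<^sub>R y)" .
  moreover have "u = 0" if "fst u *\<^sub>R x + snd u *\<^sub>R y = 0" for u :: "real \<times> real"
  proof -
    let ?c = "\<lambda>v. if v = x then fst u else snd u"
    have "(\<Sum>v\<in>B. ?c v *\<^sub>R v) = 0" using xy that by simp
    note coefficients_zero = independentD[OF B(2) _ order_refl this]
    have "?c x = 0" and "?c y = 0"
      using coefficients_zero[of x] coefficients_zero[of y] xy by auto
    then show "u = 0" using xy(2) by (simp add: prod_eq_iff)
  qed
  ultimately show thesis using that by blast
qed

lemma subspace_dim_2_acc_points_eq_projections: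
  fixes M :: "(nat \<Rightarrow>\<^sub>C real) set"
  assumes "subspace M" and "dim M = 2"
  obtains \<Phi> :: "real \<times> real \<Rightarrow> (nat \<Rightarrow>\<^sub>C real)" and K :: "(real \<times> real) set"
  where "M = range \<Phi>" and "\<And>u. \<Phi> u = 0 \<longleftrightarrow> u = 0"
    and "\<And>u. acc_points (\<Phi> u) = inner u ` K" and "K \<noteq> {}"
proof -
  obtain x y where range: "M = range (\<lambda>u. fst u *\<^sub>R x + snd u *\<^sub>R y)"
    and indep: "\<And>u. fst u *\<^sub>R x + snd u *\<^sub>R y = 0 \<Longrightarrow> u = 0"
    using subspace_dim_2_eq_range[OF assms] by blast
  show thesis
  proof (rule that)
    show "fst u *\<^sub>R x + snd u *\<^sub>R y = 0 \<longleftrightarrow> u = 0" for u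
      using indep[of u] by auto
    show "subseq_limits (\<lambda>n. (apply_bcontfun x n, apply_bcontfun y n)) \<noteq> {}"
      by (rule subseq_limits_nonempty[OF bounded_range_apply_bcontfun_pair])
  qed (fact range acc_points_linear_combination)+
qed

theorem proposition2p2:
  fixes A :: "nat set" and M :: "(nat \<Rightarrow>\<^sub>C real) set"
  assumes "1 \<notin> A"
    and "subspace M" and "dim M = 2"
    and "\<forall>z\<in>M - {0}. finite (acc_points z) \<and> card (acc_points z) \<in> A"
  shows "\<exists>n1 n2.
           n1 \<in> {card (acc_points z) | z. z \<in> M - {0}} \<and>
           (\<forall>z\<in>M - {0}. n1 \<le> card (acc_points z)) \<and>
           n2 \<in> {card (acc_points z) | z. z \<in> M} \<and>
           (\<forall>z\<in>M. card (acc_points z) \<le> n2) \<and>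
           n1 \<in> A \<and> n2 \<in> A \<and>
           (\<exists>a\<in>A. n2 - n1 < a \<and> a < n2)"
proof -
  obtain \<Phi> :: "real \<times> real \<Rightarrow> (nat \<Rightarrow>\<^sub>C real)" and K :: "(real \<times> real) set"
    where M: "M = range \<Phi>" and zero: "\<And>u. \<Phi> u = 0 \<longleftrightarrow> u = 0"
    and acc: "\<And>u. acc_points (\<Phi> u) = inner u ` K" and "K \<noteq> {}"
    using subspace_dim_2_acc_points_eq_projections[OF assms(2,3)] by blast
  have projection: "finite (inner u ` K) \<and> card (inner u ` K) \<in> A" if "u \<noteq> 0" for u
  proof -
    have "\<Phi> u \<in> M - {0}" using that by (simp add: M zero)
    from bspec[OF assms(4) this] show ?thesis by (simp only: acc)
  qed
  obtain u0 g :: "real \<times> real" where "u0 \<noteq> 0"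
    and least: "\<And>u. u \<noteq> 0 \<Longrightarrow> card (inner u0 ` K) \<le> card (inner u ` K)"
    and greatest: "\<And>u. card (inner u ` K) \<le> card (inner g ` K)"
    and in_A: "card (inner u0 ` K) \<in> A" "card (inner g ` K) \<in> A"
    and gap: "\<exists>a\<in>A. card (inner g ` K) - card (inner u0 ` K) < a \<and> a < card (inner g ` K)"
    using projection_cards_min_max_gap[OF \<open>K \<noteq> {}\<close> assms(1) projection] by blast
  have "card (inner u0 ` K) \<in> {card (acc_points z) | z. z \<in> M - {0}}"
    using \<open>u0 \<noteq> 0\<close> by (auto simp: M zero acc intro!: exI[of _ "\<Phi> u0"])
  moreover have "card (inner u0 ` K) \<le> card (acc_points z)" if z: "z \<in> M - {0}" for z
  proof -
    obtain u where "z = \<Phi> u" using z unfolding M by blast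
    with z zero have "u \<noteq> 0" by blast
    with \<open>z = \<Phi> u\<close> show ?thesis using least by (simp add: acc)
  qed
  moreover have "card (inner g ` K) \<in> {card (acc_points z) | z. z \<in> M}"
    by (auto simp: M acc intro!: exI[of _ "\<Phi> g"])
  moreover have "\<forall>z\<in>M. card (acc_points z) \<le> card (inner g ` K)"
    using greatest by (auto simp: M acc)
  ultimately show ?thesis using in_A gap by blast
qed

end
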